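(* Comprehension $\sqsubseteq$ is a preorder (reflexive and transitive relation) on the set of splitting maps on a finite-dimensional Hilbert space $\mathcal H$.
   Context: A splitting map on $\mathcal H$ is an isometry $\chi:\mathcal H\to\mathcal H_L^\chi\otimes\mathcal H_R^\chi$ for some finite-dimensional Hilbert spaces $\mathcal H_L^\chi,\mathcal H_R^\chi$. For splitting maps $\zeta,\chi$ on $\mathcal H$, $\zeta\sqsubseteq\chi$ ($\zeta$ is comprehended in $\chi$) if there exist a Hilbert space $\mathcal H_M$ and isometries $\bullet:\mathcal H_R^\zeta\to\mathcal H_M\otimes\mathcal H_R^\chi$ and $\circ:\mathcal H_L^\chi\to\mathcal H_L^\zeta\otimes\mathcal H_M$ such that $(\mathbb 1_{\mathcal H_L^\zeta}\otimes\bullet)\zeta=(\circ\otimes\mathbb 1_{\mathcal H_R^\chi})\chi$ as maps $\mathcal H\to\mathcal H_L^\zeta\otimes\mathcal H_M\otimes\mathcal H_R^\chi$. *)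

theory Defs
  imports Complex_Main "Jordan_Normal_Form.Matrix"
begin

text \<open>A finite-dimensional Hilbert space is modelled (up to unitary isomorphism) as
  C^n with its standard inner product; linear maps are complex matrices.
  Tensor products C^a (x) C^b = C^(a*b) via the Kronecker product
  (basis e_i (x) e_j corresponds to index i*b + j).\<close>

definition cadj :: "complex mat \<Rightarrow> complex mat" where
  "cadj A = mat (dim_col A) (dim_row A) (\<lambda>(i,j). cnj (A $$ (j,i)))"

definition kron :: "complex mat \<Rightarrow> complex mat \<Rightarrow> complex mat" where
  "kron A B = mat (dim_row A * dim_row B) (dim_col A * dim_col B)
     (\<lambda>(i,j). A $$ (i div dim_row B, j div dim_col B) * B $$ (i mod dim_row B, j mod dim_col B))"

definition isometry :: "nat \<Rightarrow> nat \<Rightarrow> complex mat \<Rightarrow> bool" where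
  "isometry n m V \<longleftrightarrow> V \<in> carrier_mat m n \<and> cadj V * V = 1\<^sub>m n"

text \<open>A splitting map on C^n: a triple (dL, dR, V) with V : C^n -> C^dL (x) C^dR an isometry.\<close>
type_synonym splitting = "nat \<times> nat \<times> complex mat"

definition splitting_map :: "nat \<Rightarrow> splitting \<Rightarrow> bool" where
  "splitting_map n s \<longleftrightarrow> (case s of (dL, dR, V) \<Rightarrow> isometry n (dL * dR) V)"

definition splitting_maps :: "nat \<Rightarrow> splitting set" where
  "splitting_maps n = {s. splitting_map n s}"

definition comprehended :: "splitting \<Rightarrow> splitting \<Rightarrow> bool" where
  "comprehended \<zeta> \<chi> \<longleftrightarrow> (case \<zeta> of (zL, zR, Z) \<Rightarrow> case \<chi> of (xL, xR, X) \<Rightarrow>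
     (\<exists>dM bul cir. isometry zR (dM * xR) bul \<and> isometry xL (zL * dM) cir \<and>
        kron (1\<^sub>m zL) bul * Z = kron cir (1\<^sub>m xR) * X))"

definition comprehension_rel :: "nat \<Rightarrow> (splitting \<times> splitting) set" where
  "comprehension_rel n = {(\<zeta>, \<chi>). \<zeta> \<in> splitting_maps n \<and> \<chi> \<in> splitting_maps n \<and> comprehended \<zeta> \<chi>}"

end

theory Submission
  imports Defs
begin

text \<open>Reflexivity is witnessed by the trivial middle space \<open>\<complex>\<^sup>1\<close> and identity maps.
  For transitivity, if \<open>\<zeta> \<sqsubseteq> \<chi>\<close> via \<open>(M\<^sub>1, \<bullet>\<^sub>1, \<circ>\<^sub>1)\<close> and \<open>\<chi> \<sqsubseteq> \<xi>\<close> via \<open>(M\<^sub>2, \<bullet>\<^sub>2, \<circ>\<^sub>2)\<close>,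
  then \<open>\<zeta> \<sqsubseteq> \<xi>\<close> via \<open>M\<^sub>1 \<otimes> M\<^sub>2\<close> with \<open>\<bullet> = (1 \<otimes> \<bullet>\<^sub>2) \<bullet>\<^sub>1\<close> and \<open>\<circ> = (\<circ>\<^sub>1 \<otimes> 1) \<circ>\<^sub>2\<close>.
  Both are isometries, and the required identity follows from the two given ones because
  \<open>1 \<otimes> \<bullet>\<^sub>2\<close> and \<open>\<circ>\<^sub>1 \<otimes> 1\<close> act on different tensor factors and therefore commute.\<close>

lemma sum_lessThan_mult_nat:
  "(\<Sum>k<p*q. f k) = (\<Sum>i<p. \<Sum>j<q. f (i*q+j::nat))"
proof -
  have "(\<Sum>k<p*q. f k) = (\<Sum>i<p. sum f {i*q..<i*q+q})" by (rule sum.nat_group[symmetric])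
  also have "\<dots> = (\<Sum>i<p. \<Sum>j<q. f (i*q+j))"
    by (simp add: sum.atLeastLessThan_shift_0[of f "i*q" "i*q+q" for i] atLeast0LessThan)
  finally show ?thesis .
qed

lemma index_kron:
  "i < dim_row A * dim_row B \<Longrightarrow> j < dim_col A * dim_col B \<Longrightarrow>
   kron A B $$ (i,j) = A $$ (i div dim_row B, j div dim_col B) * B $$ (i mod dim_row B, j mod dim_col B)"
  by (simp add: kron_def)

lemma dim_kron [simp]:
  "dim_row (kron A B) = dim_row A * dim_row B"
  "dim_col (kron A B) = dim_col A * dim_col B"
  by (simp_all add: kron_def)

lemma kron_carrier_mat:
  "A \<in> carrier_mat a b \<Longrightarrow> B \<in> carrier_mat c d \<Longrightarrow> kron A B \<in> carrier_mat (a*c) (b*d)"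
  by auto

lemma kron_one_one: "kron (1\<^sub>m a) (1\<^sub>m b) = 1\<^sub>m (a*b)"
proof (rule eq_matI)
  fix i j assume "i < dim_row (1\<^sub>m (a*b))" and "j < dim_col (1\<^sub>m (a*b))"
  then have ij: "i < a*b" "j < a*b" by auto
  then have "0 < b" by (auto intro!: gr0I)
  moreover have "i div b = j div b \<and> i mod b = j mod b \<longleftrightarrow> i = j"
    by (metis div_mult_mod_eq)
  ultimately show "kron (1\<^sub>m a) (1\<^sub>m b) $$ (i,j) = 1\<^sub>m (a*b) $$ (i,j)"
    using ij by (auto simp: index_kron less_mult_imp_div_less)
qed auto

lemma mod_mult_div_nat: "(i::nat) mod (c*b) div c = i div c mod b"
  by (cases "c = 0") (simp_all add: mod_mult2_eq)

lemma mod_mult_mod_nat: "(i::nat) mod (c*b) mod c = i mod c"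
  by (simp add: mod_mod_cancel)

lemma kron_assoc: "kron (kron A B) C = kron A (kron B C)"
proof (rule eq_matI)
  fix i j assume "i < dim_row (kron A (kron B C))" and "j < dim_col (kron A (kron B C))"
  then have i: "i < dim_row A * (dim_row B * dim_row C)" and j: "j < dim_col A * (dim_col B * dim_col C)"
    by auto
  then have "0 < dim_row C" "0 < dim_col C" "0 < dim_row B" "0 < dim_col B"
    by (auto intro!: gr0I)
  with i j show "kron (kron A B) C $$ (i,j) = kron A (kron B C) $$ (i,j)"
    by (simp add: index_kron less_mult_imp_div_less mult.assoc mod_mult_div_nat mod_mult_mod_nat
        div_mult2_eq mult.commute[of "dim_row B"] mult.commute[of "dim_col B"])
qed auto

lemma dim_cadj [simp]: "dim_row (cadj A) = dim_col A" "dim_col (cadj A) = dim_row A"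
  by (simp_all add: cadj_def)

lemma index_cadj: "i < dim_col A \<Longrightarrow> j < dim_row A \<Longrightarrow> cadj A $$ (i,j) = cnj (A $$ (j,i))"
  by (simp add: cadj_def)

lemma cadj_one [simp]: "cadj (1\<^sub>m n) = 1\<^sub>m n"
  by (rule eq_matI) (auto simp: cadj_def)

lemma cadj_mult: "A \<in> carrier_mat a b \<Longrightarrow> B \<in> carrier_mat b c \<Longrightarrow> cadj (A * B) = cadj B * cadj A"
  by (rule eq_matI) (auto simp: cadj_def scalar_prod_def mult.commute intro!: sum.cong)

lemma cadj_kron: "cadj (kron A B) = kron (cadj A) (cadj B)"
proof (rule eq_matI)
  fix i j assume "i < dim_row (kron (cadj A) (cadj B))" and "j < dim_col (kron (cadj A) (cadj B))"
  then have i: "i < dim_col A * dim_col B" and j: "j < dim_row A * dim_row B" by auto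
  then have "0 < dim_col B" "0 < dim_row B" by (auto intro!: gr0I)
  with i j show "cadj (kron A B) $$ (i,j) = kron (cadj A) (cadj B) $$ (i,j)"
    by (simp add: index_cadj index_kron less_mult_imp_div_less)
qed auto

lemma kron_mult:
  assumes "A \<in> carrier_mat a b" "B \<in> carrier_mat c d" "C \<in> carrier_mat b e" "D \<in> carrier_mat d f"
  shows "kron A B * kron C D = kron (A * C) (B * D)"
proof (rule eq_matI)
  fix i j assume "i < dim_row (kron (A * C) (B * D))" and "j < dim_col (kron (A * C) (B * D))"
  then have i: "i < a * c" and j: "j < e * f" using assms by auto
  then have "0 < c" "0 < f" by (auto intro!: gr0I)
  have "(kron A B * kron C D) $$ (i,j) = (\<Sum>k<b*d. kron A B $$ (i,k) * kron C D $$ (k,j))"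
    using i j assms by (simp add: scalar_prod_def lessThan_atLeast0 kron_def)
  also have "\<dots> = (\<Sum>x<b. \<Sum>y<d. kron A B $$ (i, x*d+y) * kron C D $$ (x*d+y, j))"
    by (rule sum_lessThan_mult_nat)
  also have "\<dots> = (\<Sum>x<b. \<Sum>y<d. (A $$ (i div c, x) * C $$ (x, j div f)) *
                                 (B $$ (i mod c, y) * D $$ (y, j mod f)))"
  proof (intro sum.cong refl)
    fix x y assume x: "x \<in> {..<b}" and y: "y \<in> {..<d}"
    then have "x*d+y < b*d" by (auto intro: less_le_trans[OF _ mult_le_mono1[of "Suc x" b d]])
    then show "kron A B $$ (i, x*d+y) * kron C D $$ (x*d+y, j) =
      (A $$ (i div c, x) * C $$ (x, j div f)) * (B $$ (i mod c, y) * D $$ (y, j mod f))"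
      using i j y assms by (simp add: index_kron)
  qed
  also have "\<dots> = (\<Sum>x<b. A $$ (i div c, x) * C $$ (x, j div f)) *
                  (\<Sum>y<d. B $$ (i mod c, y) * D $$ (y, j mod f))"
    by (simp add: sum_product)
  also have "\<dots> = kron (A * C) (B * D) $$ (i,j)"
    using i j assms \<open>0 < c\<close> \<open>0 < f\<close>
    by (simp add: index_kron less_mult_imp_div_less scalar_prod_def lessThan_atLeast0)
  finally show "(kron A B * kron C D) $$ (i,j) = kron (A * C) (B * D) $$ (i,j)" .
qed (use assms in auto)

lemma assoc_mult_mat_dims:
  "dim_col A = dim_row B \<Longrightarrow> dim_col B = dim_row C \<Longrightarrow> A * B * C = A * (B * C)"
  by (rule assoc_mult_mat[of A _ _ B _ C]) auto

lemma kron_one_left_mult_kron_one_right: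
  assumes "A \<in> carrier_mat a b" "B \<in> carrier_mat c d"
  shows "kron (1\<^sub>m a) B * kron A (1\<^sub>m d) = kron A B"
  using kron_mult[of "1\<^sub>m a" a a B c d A b "1\<^sub>m d" d] assms by simp

lemma kron_one_right_mult_kron_one_left:
  assumes "A \<in> carrier_mat a b" "B \<in> carrier_mat c d"
  shows "kron A (1\<^sub>m c) * kron (1\<^sub>m b) B = kron A B"
  using kron_mult[of A a b "1\<^sub>m c" c c "1\<^sub>m b" b B d] assms by simp

lemma isometry_one: "isometry n n (1\<^sub>m n)"
  by (simp add: isometry_def)

lemma isometry_mult:
  assumes "isometry n m V" "isometry m k W"
  shows "isometry n k (W * V)"
proof -
  have V: "V \<in> carrier_mat m n" "cadj V * V = 1\<^sub>m n" and W: "W \<in> carrier_mat k m" "cadj W * W = 1\<^sub>m m"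
    using assms by (auto simp: isometry_def)
  have "cadj (W * V) * (W * V) = cadj V * ((cadj W * W) * V)"
    using V(1) W(1) by (simp add: cadj_mult assoc_mult_mat_dims)
  then show ?thesis
    using V W by (simp add: isometry_def)
qed

lemma isometry_kron:
  assumes "isometry n m V" "isometry n' m' W"
  shows "isometry (n*n') (m*m') (kron V W)"
proof -
  have V: "V \<in> carrier_mat m n" "cadj V * V = 1\<^sub>m n" and W: "W \<in> carrier_mat m' n'" "cadj W * W = 1\<^sub>m n'"
    using assms by (auto simp: isometry_def)
  have "cadj (kron V W) * kron V W = kron (cadj V * V) (cadj W * W)"
    unfolding cadj_kron using V(1) W(1) by (intro kron_mult) auto
  then show ?thesis
    using V W by (simp add: isometry_def kron_one_one kron_carrier_mat)
qed

lemma comprehended_refl: "comprehended s s"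
proof -
  obtain dL dR V where s: "s = (dL, dR, V)" by (cases s)
  show ?thesis
    unfolding s comprehended_def prod.case
    by (intro exI[of _ 1] exI[of _ "1\<^sub>m dR"] exI[of _ "1\<^sub>m dL"] conjI) (simp_all add: isometry_one)
qed

lemma comprehension_eq_trans:
  assumes Z: "Z \<in> carrier_mat (zL*zR) n" and X: "X \<in> carrier_mat (xL*xR) n" and Y: "Y \<in> carrier_mat (yL*yR) n"
    and B1: "B1 \<in> carrier_mat (m1*xR) zR" and C1: "C1 \<in> carrier_mat (zL*m1) xL"
    and B2: "B2 \<in> carrier_mat (m2*yR) xR" and C2: "C2 \<in> carrier_mat (xL*m2) yL"
    and e1: "kron (1\<^sub>m zL) B1 * Z = kron C1 (1\<^sub>m xR) * X"
    and e2: "kron (1\<^sub>m xL) B2 * X = kron C2 (1\<^sub>m yR) * Y"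
  shows "kron (1\<^sub>m zL) (kron (1\<^sub>m m1) B2 * B1) * Z = kron (kron C1 (1\<^sub>m m2) * C2) (1\<^sub>m yR) * Y"
proof -
  have bul: "kron (1\<^sub>m zL) (kron (1\<^sub>m m1) B2 * B1) = kron (1\<^sub>m (zL*m1)) B2 * kron (1\<^sub>m zL) B1"
    using kron_mult[of "1\<^sub>m zL" zL zL "kron (1\<^sub>m m1) B2" "m1*(m2*yR)" "m1*xR" "1\<^sub>m zL" zL B1 zR] B1 B2
    by (simp add: kron_assoc[symmetric] kron_one_one kron_carrier_mat)
  have cir: "kron C1 (1\<^sub>m (m2*yR)) * kron C2 (1\<^sub>m yR) = kron (kron C1 (1\<^sub>m m2) * C2) (1\<^sub>m yR)"
    using kron_mult[of "kron C1 (1\<^sub>m m2)" "zL*m1*m2" "xL*m2" "1\<^sub>m yR" yR yR C2 yL "1\<^sub>m yR" yR] C1 C2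
    by (simp add: kron_assoc kron_one_one kron_carrier_mat)
  have "kron (1\<^sub>m zL) (kron (1\<^sub>m m1) B2 * B1) * Z = kron (1\<^sub>m (zL*m1)) B2 * (kron (1\<^sub>m zL) B1 * Z)"
    using B1 B2 Z by (simp add: bul assoc_mult_mat_dims)
  also have "\<dots> = kron (1\<^sub>m (zL*m1)) B2 * kron C1 (1\<^sub>m xR) * X"
    using B2 C1 X by (simp add: e1 assoc_mult_mat_dims)
  also have "\<dots> = kron C1 B2 * X"
    by (simp add: kron_one_left_mult_kron_one_right[OF C1 B2])
  also have "\<dots> = kron C1 (1\<^sub>m (m2*yR)) * kron (1\<^sub>m xL) B2 * X"
    by (simp add: kron_one_right_mult_kron_one_left[OF C1 B2])
  also have "\<dots> = kron C1 (1\<^sub>m (m2*yR)) * kron C2 (1\<^sub>m yR) * Y"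
    using B2 C1 C2 X Y by (simp add: e2[symmetric] assoc_mult_mat_dims)
  also have "\<dots> = kron (kron C1 (1\<^sub>m m2) * C2) (1\<^sub>m yR) * Y"
    by (simp add: cir)
  finally show ?thesis .
qed

lemma comprehended_trans:
  assumes "splitting_map n \<zeta>" "splitting_map n \<chi>" "splitting_map n \<xi>"
    and "comprehended \<zeta> \<chi>" "comprehended \<chi> \<xi>"
  shows "comprehended \<zeta> \<xi>"
proof -
  obtain zL zR Z where \<zeta>: "\<zeta> = (zL, zR, Z)" by (cases \<zeta>)
  obtain xL xR X where \<chi>: "\<chi> = (xL, xR, X)" by (cases \<chi>)
  obtain yL yR Y where \<xi>: "\<xi> = (yL, yR, Y)" by (cases \<xi>)
  from assms(4) obtain m1 B1 C1 where B1: "isometry zR (m1 * xR) B1" and C1: "isometry xL (zL * m1) C1"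
    and e1: "kron (1\<^sub>m zL) B1 * Z = kron C1 (1\<^sub>m xR) * X"
    unfolding \<zeta> \<chi> comprehended_def by auto
  from assms(5) obtain m2 B2 C2 where B2: "isometry xR (m2 * yR) B2" and C2: "isometry yL (xL * m2) C2"
    and e2: "kron (1\<^sub>m xL) B2 * X = kron C2 (1\<^sub>m yR) * Y"
    unfolding \<chi> \<xi> comprehended_def by auto
  have "isometry zR ((m1 * m2) * yR) (kron (1\<^sub>m m1) B2 * B1)"
    using isometry_mult[OF B1 isometry_kron[OF isometry_one B2, of m1]] by (simp add: mult.assoc)
  moreover have "isometry yL (zL * (m1 * m2)) (kron C1 (1\<^sub>m m2) * C2)"
    using isometry_mult[OF C2 isometry_kron[OF C1 isometry_one, of m2]] by (simp add: mult.assoc)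
  moreover have "kron (1\<^sub>m zL) (kron (1\<^sub>m m1) B2 * B1) * Z = kron (kron C1 (1\<^sub>m m2) * C2) (1\<^sub>m yR) * Y"
    using assms(1-3) B1 C1 B2 C2
    by (intro comprehension_eq_trans[OF _ _ _ _ _ _ _ e1 e2])
       (auto simp: \<zeta> \<chi> \<xi> splitting_map_def isometry_def)
  ultimately show ?thesis
    unfolding \<zeta> \<xi> comprehended_def by auto
qed

theorem mainTheorem6:
  fixes n :: nat
  shows "preorder_on (splitting_maps n) (comprehension_rel n)"
  unfolding preorder_on_def
proof (intro conjI)
  show "comprehension_rel n \<subseteq> splitting_maps n \<times> splitting_maps n"
    by (auto simp: comprehension_rel_def)
  show "refl_on (splitting_maps n) (comprehension_rel n)"
    by (rule refl_onI) (simp add: comprehension_rel_def comprehended_refl)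
  show "trans (comprehension_rel n)"
    by (rule transI) (auto simp: comprehension_rel_def splitting_maps_def intro: comprehended_trans)
qed

end
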